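(* Under the standing assumptions, $A$ (resp. $A^*$) acts diagonalizably on $V$ with eigenvalues $\theta_0,\dots,\theta_d$ (resp. $\theta^*_0,\dots,\theta^*_d$), and for $0\le i\le d$ the eigenspace of $A$ for $\theta_i$ (resp. of $A^*$ for $\theta^*_i$) has dimension $\binom{d}{i}$.
   Context: Let $\mathbb F$ be an algebraically closed field, $d\ge0$, and $q,a,b,c,a^*,b^*,c^*\in\mathbb F$ with $q,b,c,b^*,c^*$ nonzero and $q^2\ne\pm1$. Put $\theta_i=a+bq^{2i-d}+cq^{d-2i}$ and $\theta^*_i=a^*+b^*q^{2i-d}+c^*q^{d-2i}$ ($0\le i\le d$), and assume $\theta_0,\dots,\theta_d$ are mutually distinct and $\theta^*_0,\dots,\theta^*_d$ are mutually distinct (this forces $q^{2i}\ne1$ for $1\le i\le d$). $U_q(\widehat{\mathfrak{sl}}_2)$ is the associative unital $\mathbb F$-algebra with generators $e_i^{\pm},K_i^{\pm1}$ ($i\in\{0,1\}$) and relations $K_iK_i^{-1}=K_i^{-1}K_i=1$, $K_0K_1=K_1K_0$, $K_ie_i^{\pm}K_i^{-1}=q^{\pm2}e_i^{\pm}$, $K_ie_j^{\pm}K_i^{-1}=q^{\mp2}e_j^{\pm}$ ($i\ne j$), $e_i^+e_i^--e_i^-e_i^+=(K_i-K_i^{-1})/(q-q^{-1})$, $e_0^{\pm}e_1^{\mp}=e_1^{\mp}e_0^{\pm}$, and the $q$-Serre relations $(e_i^\pm)^3e_j^\pm-[3]_q(e_i^\pm)^2e_j^\pm e_i^\pm+[3]_qe_i^\pm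 e_j^\pm(e_i^\pm)^2-e_j^\pm(e_i^\pm)^3=0$ ($i\ne j$), where $[3]_q=q^2+1+q^{-2}$. Tensor products of modules are formed via $e_i^+(v\otimes w)=e_i^+v\otimes K_iw+v\otimes e_i^+w$, $e_i^-(v\otimes w)=e_i^-v\otimes w+K_i^{-1}v\otimes e_i^-w$, $K_i(v\otimes w)=K_iv\otimes K_iw$. For nonzero $\alpha\in\mathbb F$, $V(\alpha)$ is the module with basis $x,y$ and $K_1x=qx$, $K_1y=q^{-1}y$, $e_1^-x=y$, $e_1^-y=0$, $e_1^+x=0$, $e_1^+y=x$, $K_0x=q^{-1}x$, $K_0y=qy$, $e_0^-x=0$, $e_0^-y=q\alpha^{-1}x$, $e_0^+x=q^{-1}\alpha y$, $e_0^+y=0$. $V=V(\alpha_1)\otimes\cdots\otimes V(\alpha_d)$ with nonzero $\alpha_i\in\mathbb F$ (for $d=0$, the trivial module where each $e_i^\pm$ acts as $0$ and each $K_i^{\pm1}$ as $1$). Fix $u,v,u^*,v^*\in\mathbb F$ with $uv^*=-bb^*q^{-1}(q-q^{-1})^2$, $vu^*=-cc^*q^{-1}(q-q^{-1})^2$; set $R=ue_0^++ve_1^-K_1$, $L=u^*e_1^++v^*e_0^-K_0$, $A=a1+bK_0+cK_1+R$, $A^*=a^*1+b^*K_0+c^*K_1+L$. *)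

theory Defs
  imports "Jordan_Normal_Form.Jordan_Normal_Form_Uniqueness"
begin

text \<open>Generators of U_q(affine sl2): e_0^+, e_0^-, e_1^+, e_1^-, K_0, K_1, K_0^{-1}, K_1^{-1}.\<close>
datatype gen = E0p | E0m | E1p | E1m | K0 | K1 | K0inv | K1inv

text \<open>Kronecker (tensor) product of matrices; index (i1,i2) of the product basis is
  i1 * (dim of second factor) + i2.\<close>
definition kron :: "'a :: semiring_1 mat \<Rightarrow> 'a mat \<Rightarrow> 'a mat" where
  "kron M N = mat (dim_row M * dim_row N) (dim_col M * dim_col N)
     (\<lambda>(i,j). M $$ (i div dim_row N, j div dim_col N) * N $$ (i mod dim_row N, j mod dim_col N))"

text \<open>Action of the generators on the evaluation module V(alpha), basis x (index 0), y (index 1).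
  The matrix entry (i,j) is the coefficient of basis vector i in the image of basis vector j.\<close>
definition evalV :: "'a :: field \<Rightarrow> 'a \<Rightarrow> gen \<Rightarrow> 'a mat" where
  "evalV q \<alpha> g = mat 2 2 (\<lambda>(i,j). case g of
      K1 \<Rightarrow> (if i = j then (if i = 0 then q else inverse q) else 0)
    | K1inv \<Rightarrow> (if i = j then (if i = 0 then inverse q else q) else 0)
    | K0 \<Rightarrow> (if i = j then (if i = 0 then inverse q else q) else 0)
    | K0inv \<Rightarrow> (if i = j then (if i = 0 then q else inverse q) else 0)
    | E1m \<Rightarrow> (if i = 1 \<and> j = 0 then 1 else 0)
    | E1p \<Rightarrow> (if i = 0 \<and> j = 1 then 1 else 0)
    | E0m \<Rightarrow> (if i = 0 \<and> j = 1 then q * inverse \<alpha> else 0)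
    | E0p \<Rightarrow> (if i = 1 \<and> j = 0 then inverse q * \<alpha> else 0))"

definition Kof :: "gen \<Rightarrow> gen" where
  "Kof g = (case g of E0p \<Rightarrow> K0 | E0m \<Rightarrow> K0 | E1p \<Rightarrow> K1 | E1m \<Rightarrow> K1 | _ \<Rightarrow> g)"

definition Kinvof :: "gen \<Rightarrow> gen" where
  "Kinvof g = (case g of E0p \<Rightarrow> K0inv | E0m \<Rightarrow> K0inv | E1p \<Rightarrow> K1inv | E1m \<Rightarrow> K1inv | _ \<Rightarrow> g)"

text \<open>Action of generators on V(alpha_1) \<otimes> ... \<otimes> V(alpha_d), built as
  V(alpha_1) \<otimes> (V(alpha_2) \<otimes> ... ) via the given coproduct.\<close>
fun tens :: "'a :: field \<Rightarrow> 'a list \<Rightarrow> gen \<Rightarrow> 'a mat" where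
  "tens q [] g = (case g of E0p \<Rightarrow> 0\<^sub>m 1 1 | E0m \<Rightarrow> 0\<^sub>m 1 1 | E1p \<Rightarrow> 0\<^sub>m 1 1 | E1m \<Rightarrow> 0\<^sub>m 1 1
                   | _ \<Rightarrow> 1\<^sub>m 1)"
| "tens q (\<alpha> # as) g = (case g of
      E0p \<Rightarrow> kron (evalV q \<alpha> E0p) (tens q as K0) + kron (1\<^sub>m 2) (tens q as E0p)
    | E1p \<Rightarrow> kron (evalV q \<alpha> E1p) (tens q as K1) + kron (1\<^sub>m 2) (tens q as E1p)
    | E0m \<Rightarrow> kron (evalV q \<alpha> E0m) (1\<^sub>m (2 ^ length as)) + kron (evalV q \<alpha> K0inv) (tens q as E0m)
    | E1m \<Rightarrow> kron (evalV q \<alpha> E1m) (1\<^sub>m (2 ^ length as)) + kron (evalV q \<alpha> K1inv) (tens q as E1m)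
    | _ \<Rightarrow> kron (evalV q \<alpha> g) (tens q as g))"

definition theta :: "'a :: field \<Rightarrow> 'a \<Rightarrow> 'a \<Rightarrow> 'a \<Rightarrow> nat \<Rightarrow> nat \<Rightarrow> 'a" where
  "theta a b c q d i = a + b * q powi (2 * int i - int d) + c * q powi (int d - 2 * int i)"

definition opA :: "'a :: field \<Rightarrow> 'a list \<Rightarrow> 'a \<Rightarrow> 'a \<Rightarrow> 'a \<Rightarrow> 'a \<Rightarrow> 'a \<Rightarrow> 'a mat" where
  "opA q as a b c u v = a \<cdot>\<^sub>m 1\<^sub>m (2 ^ length as) + b \<cdot>\<^sub>m tens q as K0 + c \<cdot>\<^sub>m tens q as K1
     + u \<cdot>\<^sub>m tens q as E0p + v \<cdot>\<^sub>m (tens q as E1m * tens q as K1)"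

definition opAs :: "'a :: field \<Rightarrow> 'a list \<Rightarrow> 'a \<Rightarrow> 'a \<Rightarrow> 'a \<Rightarrow> 'a \<Rightarrow> 'a \<Rightarrow> 'a mat" where
  "opAs q as as' bs cs us vs = as' \<cdot>\<^sub>m 1\<^sub>m (2 ^ length as) + bs \<cdot>\<^sub>m tens q as K0 + cs \<cdot>\<^sub>m tens q as K1
     + us \<cdot>\<^sub>m tens q as E1p + vs \<cdot>\<^sub>m (tens q as E0m * tens q as K0)"

definition alg_closed_field :: "'a :: field itself \<Rightarrow> bool" where
  "alg_closed_field _ = (\<forall>p :: 'a poly. degree p > 0 \<longrightarrow> (\<exists>x. poly p x = 0))"

end

theory Submission
  imports Defs "Jordan_Normal_Form.Jordan_Normal_Form_Existence"
begin

(* Index the standard tensor basis of V by i < 2^d (binary digits, the first tensor factor being the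
   most significant digit, digit 1 standing for y) and let ycount d i be the number of y-factors.
   K_0 and K_1 act diagonally by q^(2 ycount - d) and its inverse, so the diagonal entry of A at i is
   theta_(ycount i), and that of A* is theta^*_(ycount i).  The remaining summands u e_0^+ + v e_1^- K_1
   of A only have entries (i,j) with j < i and ycount j < ycount i, those of A* only entries with i < j
   and ycount i < ycount j: A is lower and A* upper triangular, graded by the y-count.

   Next, the y-counts of the basis are binomially distributed. *)


definition diagonalizable :: "'a::field mat \<Rightarrow> bool" where
  "diagonalizable M \<longleftrightarrow> (\<exists>D. diagonal_mat D \<and> similar_mat M D)"

lemma sum_list_eq_pointwise:
  fixes f g :: "'b \<Rightarrow> nat"
  assumes "\<And>y. y \<in> set xs \<Longrightarrow> g y \<le> f y"
    and "sum_list (map f xs) = sum_list (map g xs)" and "x \<in> set xs"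
  shows "f x = g x"
  using assms
proof (induction xs)
  case (Cons y xs)
  have "sum_list (map g xs) \<le> sum_list (map f xs)"
    using Cons.prems(1) by (intro sum_list_mono) auto
  moreover have "g y \<le> f y" using Cons.prems(1) by simp
  ultimately have "f y = g y" "sum_list (map f xs) = sum_list (map g xs)"
    using Cons.prems(2) by simp_all
  with Cons show ?case by auto
qed simp

lemma order_prod_linear_factors:
  fixes x :: "'a::field"
  shows "Polynomial.order x (\<Prod>a\<leftarrow>xs. [:-a, 1:]) = count (mset xs) x"
proof (induction xs)
  case (Cons a xs)
  have "(\<Prod>a\<leftarrow>xs. [:-a, 1:]) \<noteq> 0" by (auto simp: prod_list_zero_iff)
  hence "Polynomial.order x ([:-a, 1:] * (\<Prod>a\<leftarrow>xs. [:-a, 1:]))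
      = Polynomial.order x [:-a, 1:] + Polynomial.order x (\<Prod>a\<leftarrow>xs. [:-a, 1:])"
    by (intro order_mult no_zero_divisors) simp_all
  with Cons show ?case by (simp only: list.map prod_list.Cons) (simp add: order_linear')
qed (simp add: order_0I)

lemma eigenvalue_iff_order:
  fixes M :: "'a::field mat"
  assumes "M \<in> carrier_mat n n"
  shows "eigenvalue M e \<longleftrightarrow> Polynomial.order e (char_poly M) \<noteq> 0"
proof -
  have "char_poly M \<noteq> 0" using degree_monic_char_poly[OF assms] by auto
  thus ?thesis by (simp add: eigenvalue_root_char_poly[OF assms] order_root)
qed

lemma jordan_matrix_diagonal:
  "\<forall>(s,e)\<in>set n_as. s = 1 \<Longrightarrow> diagonal_mat (jordan_matrix n_as)"
proof (induction n_as)
  case Nil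
  show ?case by (simp add: diagonal_mat_def)
next
  case (Cons se n_as)
  obtain e where se: "se = (1, e)" using Cons.prems by (cases se) auto
  let ?r = "sum_list (map fst n_as)"
  have "jordan_matrix n_as \<in> carrier_mat ?r ?r" by simp
  moreover have "jordan_matrix (se # n_as) =
      four_block_mat (jordan_block 1 e) (0\<^sub>m 1 ?r) (0\<^sub>m ?r 1) (jordan_matrix n_as)"
    unfolding se by (rule jordan_matrix_Cons)
  moreover have "diagonal_mat (jordan_matrix n_as)" using Cons by auto
  ultimately show ?case unfolding diagonal_mat_def by auto
qed

(* If the generalized eigenspaces of order 2 and 1 coincide for every eigenvalue, all Jordan blocks
   have size one: a block of size s contributes min 2 s resp. min 1 s to their dimensions. *)
lemma jordan_blocks_trivial:
  assumes jnf: "jordan_nf M n_as"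
    and stable: "\<And>e. dim_gen_eigenspace M e 2 = dim_gen_eigenspace M e 1"
  shows "\<forall>(s,e)\<in>set n_as. s = 1"
proof (intro ballI, clarify)
  fix s e assume se: "(s, e) \<in> set n_as"
  let ?sizes = "map fst (filter (\<lambda>(s', e'). e' = e) n_as)"
  have "sum_list (map (min 2) ?sizes) = sum_list (map (min 1) ?sizes)"
    using stable[of e] by (simp add: dim_gen_eigenspace[OF jnf])
  moreover have "s \<in> set ?sizes" using se by force
  ultimately have "min 2 s = min 1 s"
    by (rule sum_list_eq_pointwise[rotated]) simp
  moreover have "s \<noteq> 0" using jnf se unfolding jordan_nf_def by force
  ultimately show "s = 1" by simp
qed

lemma triangular_spectrum:
  fixes M :: "'a::field mat"
  assumes M: "M \<in> carrier_mat n n" and ut: "upper_triangular M"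
    and stable: "\<And>e. dim_gen_eigenspace M e 2 = dim_gen_eigenspace M e 1"
  shows "diagonalizable M"
    and "eigenvalue M e \<longleftrightarrow> e \<in> set (diag_mat M)"
    and "kernel_dim (char_matrix M e) = count (mset (diag_mat M)) e"
proof -
  obtain n_as where jnf: "jordan_nf M n_as"
    using triangular_to_jnf_vector[OF M ut] by blast
  have one: "\<forall>(s,e)\<in>set n_as. s = 1" by (rule jordan_blocks_trivial[OF jnf stable])
  have order: "Polynomial.order e (char_poly M) = count (mset (diag_mat M)) e" for e
    by (simp add: char_poly_upper_triangular[OF M ut] order_prod_linear_factors)
  show "diagonalizable M"
    using jnf jordan_matrix_diagonal[OF one] unfolding jordan_nf_def diagonalizable_def by blast
  show "eigenvalue M e \<longleftrightarrow> e \<in> set (diag_mat M)"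
    by (simp add: eigenvalue_iff_order[OF M] order)
  have "kernel_dim (char_matrix M e) = dim_gen_eigenspace M e 1"
    using M by (simp add: dim_gen_eigenspace_def)
  also have "\<dots> = sum_list (map fst (filter (\<lambda>(s, e'). e' = e) n_as))"
    unfolding dim_gen_eigenspace[OF jnf]
    using one by (intro arg_cong[where f = sum_list]) (auto simp: min_def)
  also have "\<dots> = Polynomial.order e (char_poly M)"
    by (simp add: jordan_nf_order[OF jnf] case_prod_beta')
  finally show "kernel_dim (char_matrix M e) = count (mset (diag_mat M)) e"
    by (simp add: order)
qed

locale graded_upper_triangular =
  fixes M :: "'a::field mat" and n :: nat and wt :: "nat \<Rightarrow> 'b::linorder"
  assumes carrier: "M \<in> carrier_mat n n"
    and off_diag: "\<And>i j. i < n \<Longrightarrow> j < n \<Longrightarrow> i \<noteq> j \<Longrightarrow> M $$ (i,j) \<noteq> 0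
      \<Longrightarrow> i < j \<and> wt i < wt j"
    and diag_sep: "\<And>i j. i < n \<Longrightarrow> j < n \<Longrightarrow> M $$ (i,i) = M $$ (j,j) \<longleftrightarrow> wt i = wt j"
begin

lemma upper: "upper_triangular M"
proof (rule upper_triangularI)
  fix i j assume "j < i" "i < dim_row M"
  thus "M $$ (i,j) = 0" using carrier off_diag[of i j] by fastforce
qed

lemma char_matrix_carrier: "char_matrix M e \<in> carrier_mat n n"
  using carrier by simp

lemma ex_top_weight:
  assumes "x \<in> carrier_vec n" and "x \<noteq> 0\<^sub>v n"
  obtains i where "i < n" "x $ i \<noteq> 0" "\<And>j. j < n \<Longrightarrow> x $ j \<noteq> 0 \<Longrightarrow> wt j \<le> wt i"
proof -
  let ?S = "{i. i < n \<and> x $ i \<noteq> 0}"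
  have "?S \<noteq> {}" using assms by (auto intro: eq_vecI)
  hence "Max (wt ` ?S) \<in> wt ` ?S" by (intro Max_in) auto
  then obtain i where "i \<in> ?S" "wt i = Max (wt ` ?S)" by auto
  with that show ?thesis by auto
qed

(* At a coordinate i of weight at least the weights of the whole support of x, M - e acts on x by its
   diagonal entry alone: the off-diagonal entries of row i only see coordinates of larger weight. *)
lemma char_matrix_top_entry:
  assumes x: "x \<in> carrier_vec n" and i: "i < n"
    and below: "\<And>j. j < n \<Longrightarrow> x $ j \<noteq> 0 \<Longrightarrow> wt j \<le> wt i"
  shows "(char_matrix M e *\<^sub>v x) $ i = (M $$ (i,i) - e) * x $ i"
proof -
  have vanish: "x $ j = 0" if "j < n" "wt i < wt j" for j
    using below[OF that(1)] that(2) by (meson leD)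
  have "(char_matrix M e *\<^sub>v x) $ i = (\<Sum>j=0..<n. char_matrix M e $$ (i,j) * x $ j)"
    using char_matrix_carrier[of e] x i by (simp add: scalar_prod_def)
  also have "\<dots> = (\<Sum>j=0..<n. if j = i then (M $$ (i,i) - e) * x $ i else 0)"
    using carrier i off_diag vanish by (intro sum.cong) (auto simp: char_matrix_def)
  finally show ?thesis using i by simp
qed

(* Let u = (M - e) v be nonzero and pick top-weight coordinates
   i of u and j of v.  Applying M - e to u at i forces M_ii = e.  If wt j <= wt i then u_i = 0 by the
   same computation for v; otherwise M_jj differs from e, so u_j is nonzero and above u's top weight. *)
lemma char_matrix_sq_kernel:
  assumes v: "v \<in> carrier_vec n"
    and sq: "char_matrix M e *\<^sub>v (char_matrix M e *\<^sub>v v) = 0\<^sub>v n"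
  shows "char_matrix M e *\<^sub>v v = 0\<^sub>v n"
proof (rule ccontr)
  define u where "u = char_matrix M e *\<^sub>v v"
  have u: "u \<in> carrier_vec n" using char_matrix_carrier[of e] v by (simp add: u_def)
  assume "char_matrix M e *\<^sub>v v \<noteq> 0\<^sub>v n"
  hence "u \<noteq> 0\<^sub>v n" by (simp add: u_def)
  then obtain i where i: "i < n" "u $ i \<noteq> 0"
    and top_i: "\<And>j. j < n \<Longrightarrow> u $ j \<noteq> 0 \<Longrightarrow> wt j \<le> wt i"
    using ex_top_weight[OF u] by blast
  have "(M $$ (i,i) - e) * u $ i = (char_matrix M e *\<^sub>v u) $ i"
    by (rule char_matrix_top_entry[OF u i(1) top_i, symmetric])
  also have "\<dots> = 0" using sq i by (simp add: u_def)
  finally have ev_i: "M $$ (i,i) = e" using i by simp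
  have "v \<noteq> 0\<^sub>v n" using \<open>u \<noteq> 0\<^sub>v n\<close> char_matrix_carrier[of e] by (auto simp: u_def)
  then obtain j where j: "j < n" "v $ j \<noteq> 0"
    and top_j: "\<And>k. k < n \<Longrightarrow> v $ k \<noteq> 0 \<Longrightarrow> wt k \<le> wt j"
    using ex_top_weight[OF v] by blast
  have u_above: "u $ k = (M $$ (k,k) - e) * v $ k" if k: "k < n" "wt j \<le> wt k" for k
    unfolding u_def by (rule char_matrix_top_entry[OF v k(1) order_trans[OF top_j k(2)]])
  show False
  proof (cases "wt j \<le> wt i")
    case True
    have "u $ i = (M $$ (i,i) - e) * v $ i" by (rule u_above[OF i(1) True])
    thus False using ev_i i(2) by simp
  next
    case False
    hence "M $$ (j,j) \<noteq> M $$ (i,i)" using diag_sep[OF j(1) i(1)] by auto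
    hence "u $ j \<noteq> 0" using u_above[OF j(1) order.refl] ev_i j(2) by simp
    thus False using top_i[OF j(1)] False by simp
  qed
qed

lemma gen_eigenspace_stable: "dim_gen_eigenspace M e 2 = dim_gen_eigenspace M e 1"
proof -
  let ?N = "char_matrix M e"
  have N: "?N \<in> carrier_mat n n" by (rule char_matrix_carrier)
  have "?N ^\<^sub>m 2 = ?N * ?N" "?N ^\<^sub>m 1 = ?N" using N by (simp_all add: numeral_2_eq_2)
  hence "mat_kernel (?N ^\<^sub>m 2) = mat_kernel (?N ^\<^sub>m 1)"
    unfolding mat_kernel_def using N char_matrix_sq_kernel by auto
  moreover have "dim_col (?N ^\<^sub>m 2) = n" "dim_col (?N ^\<^sub>m 1) = n" using N by auto
  ultimately show ?thesis by (simp add: dim_gen_eigenspace_def kernel_dim_def)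
qed

lemmas spectrum = triangular_spectrum[OF carrier upper gen_eigenspace_stable]

end

lemma similar_mat_spectral_invariants:
  fixes M M' :: "'a::field mat"
  assumes M: "M \<in> carrier_mat n n" and M': "M' \<in> carrier_mat n n" and sim: "similar_mat M M'"
  shows "eigenvalue M e \<longleftrightarrow> eigenvalue M' e"
    and "kernel_dim (char_matrix M e) = kernel_dim (char_matrix M' e)"
proof -
  show "eigenvalue M e \<longleftrightarrow> eigenvalue M' e"
    by (simp add: eigenvalue_root_char_poly[OF M] eigenvalue_root_char_poly[OF M'] char_poly_similar[OF sim])
  have "dim_gen_eigenspace M e 1 = dim_gen_eigenspace M' e 1"
    by (simp add: dim_gen_eigenspace_similar[OF sim])
  thus "kernel_dim (char_matrix M e) = kernel_dim (char_matrix M' e)"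
    using M M' by (simp add: dim_gen_eigenspace_def)
qed

definition reversal_mat :: "nat \<Rightarrow> 'a::semiring_1 mat" where
  "reversal_mat n = mat n n (\<lambda>(i,j). if i + j = n - 1 then 1 else 0)"

lemma reversal_mat_carrier[simp]: "reversal_mat n \<in> carrier_mat n n"
  by (simp add: reversal_mat_def)

lemma reversal_mat_mult_left:
  fixes X :: "'a::semiring_1 mat"
  assumes X: "X \<in> carrier_mat n m"
  shows "reversal_mat n * X = mat n m (\<lambda>(i,j). X $$ (n-1-i, j))"
proof (rule eq_matI)
  fix i j assume "i < dim_row (mat n m (\<lambda>(i,j). X $$ (n-1-i, j)))"
    and "j < dim_col (mat n m (\<lambda>(i,j). X $$ (n-1-i, j)))"
  hence i: "i < n" and j: "j < m" by auto
  have "(reversal_mat n * X) $$ (i,j) = (\<Sum>k=0..<n. (if i + k = n-1 then 1 else 0) * X $$ (k,j))"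
    using X i j by (simp add: reversal_mat_def scalar_prod_def)
  also have "\<dots> = (\<Sum>k=0..<n. if k = n-1-i then X $$ (k,j) else 0)"
    using i by (intro sum.cong) auto
  also have "\<dots> = X $$ (n-1-i, j)" using i by simp
  finally show "(reversal_mat n * X) $$ (i,j) = mat n m (\<lambda>(i,j). X $$ (n-1-i, j)) $$ (i,j)"
    using i j by simp
qed (use X in \<open>auto simp: reversal_mat_def\<close>)

lemma reversal_mat_mult_right:
  fixes X :: "'a::semiring_1 mat"
  assumes X: "X \<in> carrier_mat m n"
  shows "X * reversal_mat n = mat m n (\<lambda>(i,j). X $$ (i, n-1-j))"
proof (rule eq_matI)
  fix i j assume "i < dim_row (mat m n (\<lambda>(i,j). X $$ (i, n-1-j)))"
    and "j < dim_col (mat m n (\<lambda>(i,j). X $$ (i, n-1-j)))"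
  hence i: "i < m" and j: "j < n" by auto
  have "(X * reversal_mat n) $$ (i,j) = (\<Sum>k=0..<n. X $$ (i,k) * (if k + j = n-1 then 1 else 0))"
    using X i j by (simp add: reversal_mat_def scalar_prod_def)
  also have "\<dots> = (\<Sum>k=0..<n. if k = n-1-j then X $$ (i,k) else 0)"
    using j by (intro sum.cong) auto
  also have "\<dots> = X $$ (i, n-1-j)" using j by simp
  finally show "(X * reversal_mat n) $$ (i,j) = mat m n (\<lambda>(i,j). X $$ (i, n-1-j)) $$ (i,j)"
    using i j by simp
qed (use X in \<open>auto simp: reversal_mat_def\<close>)

lemma similar_reversed:
  fixes M :: "'a::semiring_1 mat"
  assumes M: "M \<in> carrier_mat n n"
  shows "similar_mat M (mat n n (\<lambda>(i,j). M $$ (n-1-i, n-1-j)))"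
proof -
  let ?R = "reversal_mat n :: 'a mat"
  have RR: "?R * ?R = 1\<^sub>m n"
    by (subst reversal_mat_mult_left[OF reversal_mat_carrier], rule eq_matI) (auto simp: reversal_mat_def)
  have left: "?R * mat n n (\<lambda>(i,j). M $$ (n-1-i, n-1-j)) = mat n n (\<lambda>(i,j). M $$ (i, n-1-j))"
    by (subst reversal_mat_mult_left[of _ n n]) (auto intro!: eq_matI)
  have "?R * mat n n (\<lambda>(i,j). M $$ (n-1-i, n-1-j)) * ?R = M"
    unfolding left using M by (subst reversal_mat_mult_right[of _ n n]) (auto intro!: eq_matI)
  hence "similar_mat_wit M (mat n n (\<lambda>(i,j). M $$ (n-1-i, n-1-j))) ?R ?R"
    using M RR by (intro similar_mat_witI[of _ _ n]) auto
  thus ?thesis unfolding similar_mat_def by blast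
qed

(* The lower triangular version of a graded matrix.  Reversing the basis order, which keeps the weight
   of each basis vector, makes it upper triangular, so it has the same spectral properties. *)
locale graded_lower_triangular =
  fixes M :: "'a::field mat" and n :: nat and wt :: "nat \<Rightarrow> 'b::linorder"
  assumes carrier: "M \<in> carrier_mat n n"
    and off_diag: "\<And>i j. i < n \<Longrightarrow> j < n \<Longrightarrow> i \<noteq> j \<Longrightarrow> M $$ (i,j) \<noteq> 0
      \<Longrightarrow> j < i \<and> wt i < wt j"
    and diag_sep: "\<And>i j. i < n \<Longrightarrow> j < n \<Longrightarrow> M $$ (i,i) = M $$ (j,j) \<longleftrightarrow> wt i = wt j"
begin

definition reversed :: "'a mat" where
  "reversed = mat n n (\<lambda>(i,j). M $$ (n-1-i, n-1-j))"

lemma reversed_graded: "graded_upper_triangular reversed n (\<lambda>i. wt (n-1-i))"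
proof
  fix i j assume ij: "i < n" "j < n" "i \<noteq> j" and "reversed $$ (i,j) \<noteq> 0"
  hence "n-1-j < n-1-i \<and> wt (n-1-i) < wt (n-1-j)" by (intro off_diag) (auto simp: reversed_def)
  thus "i < j \<and> wt (n-1-i) < wt (n-1-j)" using ij by auto
qed (use diag_sep in \<open>auto simp: reversed_def\<close>)

lemma spectrum:
  shows "diagonalizable M"
    and "eigenvalue M e \<longleftrightarrow> e \<in> set (diag_mat M)"
    and "kernel_dim (char_matrix M e) = count (mset (diag_mat M)) e"
proof -
  interpret R: graded_upper_triangular reversed n "\<lambda>i. wt (n-1-i)" by (rule reversed_graded)
  have R: "reversed \<in> carrier_mat n n" by (simp add: reversed_def)
  have sim: "similar_mat M reversed" unfolding reversed_def by (rule similar_reversed[OF carrier])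
  have diag: "diag_mat reversed = rev (diag_mat M)"
    using carrier by (intro nth_equalityI) (auto simp: reversed_def diag_mat_def rev_nth)
  show "diagonalizable M"
    using R.spectrum(1) similar_mat_trans[OF sim] unfolding diagonalizable_def by blast
  show "eigenvalue M e \<longleftrightarrow> e \<in> set (diag_mat M)"
    using R.spectrum(2) similar_mat_spectral_invariants(1)[OF carrier R sim] diag by simp
  show "kernel_dim (char_matrix M e) = count (mset (diag_mat M)) e"
    using R.spectrum(3) similar_mat_spectral_invariants(2)[OF carrier R sim] diag by simp
qed

end

(* Number of y-factors of the i-th basis vector x/y (x) ... (x) x/y of a tensor power with m factors,
   i.e. the number of binary digits 1 of i, the first factor being the most significant digit. *)
fun ycount :: "nat \<Rightarrow> nat \<Rightarrow> nat" where
  "ycount 0 i = 0"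
| "ycount (Suc m) i = i div 2 ^ m + ycount m (i mod 2 ^ m)"

lemma ycount_split: "a < 2 \<Longrightarrow> i < 2 ^ m \<Longrightarrow> ycount (Suc m) (a * 2 ^ m + i) = a + ycount m i"
  by simp

lemma ycount_le: "i < 2 ^ m \<Longrightarrow> ycount m i \<le> m"
proof (induction m arbitrary: i)
  case (Suc m)
  have "i div 2 ^ m < 2" using Suc.prems by (simp add: less_mult_imp_div_less mult.commute)
  thus ?case using Suc.IH[of "i mod 2 ^ m"] by simp
qed simp

definition weight_mset :: "nat \<Rightarrow> nat multiset" where
  "weight_mset m = mset (map (ycount m) [0..<2 ^ m])"

(* Adding a factor: its x-half keeps the y-counts, its y-half raises them by one. *)
lemma weight_mset_Suc: "weight_mset (Suc m) = weight_mset m + image_mset Suc (weight_mset m)"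
proof -
  let ?N = "2 ^ m :: nat"
  have upt: "[0..<2 ^ Suc m] = [0..<?N] @ map (\<lambda>i. i + ?N) [0..<?N]"
    by (simp add: map_add_upt upt_add_eq_append[of 0 ?N ?N, symmetric] mult_2)
  have low: "map (ycount (Suc m)) [0..<?N] = map (ycount m) [0..<?N]"
    by simp
  have high: "map (ycount (Suc m)) (map (\<lambda>i. i + ?N) [0..<?N]) = map Suc (map (ycount m) [0..<?N])"
    using ycount_split[of 1 _ m] by (simp add: add.commute)
  show ?thesis
    unfolding weight_mset_def upt map_append low high mset_append mset_map ..
qed

lemma count_image_mset_inj_on:
  assumes "inj_on f (insert x (set_mset A))"
  shows "count (image_mset f A) (f x) = count A x"
proof -
  have "f -` {f x} \<inter> set_mset A = (if x \<in># A then {x} else {})"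
    by (auto dest: inj_onD[OF assms])
  thus ?thesis by (simp add: count_image_mset not_in_iff)
qed

lemma count_weight_mset: "count (weight_mset m) k = m choose k"
proof (induction m arbitrary: k)
  case 0
  show ?case by (simp add: weight_mset_def)
next
  case (Suc m)
  show ?case
  proof (cases k)
    case 0
    have "count (image_mset Suc (weight_mset m)) 0 = 0" by (auto simp: count_eq_zero_iff)
    thus ?thesis using Suc.IH[of 0] 0 by (simp add: weight_mset_Suc)
  next
    case (Suc k')
    have "count (image_mset Suc (weight_mset m)) (Suc k') = m choose k'"
      using Suc.IH[of k'] by (subst count_image_mset_inj_on) auto
    thus ?thesis using Suc.IH[of k] Suc by (simp add: weight_mset_Suc)
  qed
qed

lemma set_weight_mset: "set_mset (weight_mset d) = {0..d}"
proof
  show "set_mset (weight_mset d) \<subseteq> {0..d}" using ycount_le by (auto simp: weight_mset_def)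
  show "{0..d} \<subseteq> set_mset (weight_mset d)"
    using count_weight_mset[of d] by (auto simp flip: count_greater_zero_iff)
qed

lemma mset_map_ycount:
  "mset (map (\<lambda>i. f (ycount d i)) [0..<2 ^ d]) = image_mset f (weight_mset d)"
  unfolding weight_mset_def by (simp only: mset_map image_mset.compositionality o_def)

lemma set_map_ycount:
  "e \<in> set (map (\<lambda>i. f (ycount d i)) [0..<2 ^ d]) \<longleftrightarrow> (\<exists>k\<le>d. e = f k)"
  using arg_cong[OF mset_map_ycount[of f d], of set_mset] by (auto simp: set_weight_mset)

lemma count_map_ycount:
  assumes inj: "inj_on f {0..d}" and "k \<le> d"
  shows "count (mset (map (\<lambda>i. f (ycount d i)) [0..<2 ^ d])) (f k) = d choose k"
proof -
  have "count (image_mset f (weight_mset d)) (f k) = count (weight_mset d) k"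
    using \<open>k \<le> d\<close> by (intro count_image_mset_inj_on inj_on_subset[OF inj]) (auto simp: set_weight_mset)
  thus ?thesis unfolding mset_map_ycount by (simp add: count_weight_mset)
qed

lemma inj_on_ycount_eq_iff:
  assumes "inj_on f {0..d}" "i < 2 ^ d" "j < 2 ^ d"
  shows "f (ycount d i) = f (ycount d j) \<longleftrightarrow> ycount d i = ycount d j"
  using assms ycount_le[of i d] ycount_le[of j d] by (auto dest: inj_onD)

lemma mixed_radix_less: "a < r \<Longrightarrow> i < s \<Longrightarrow> a * s + i < r * (s::nat)"
proof -
  assume "a < r" "i < s"
  hence "a * s + i < Suc a * s" by simp
  also have "\<dots> \<le> r * s" using \<open>a < r\<close> by (intro mult_le_mono1) simp
  finally show ?thesis .
qed

lemma mixed_radix_split: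
  assumes "i < r * (s::nat)"
  obtains a i' where "i = a * s + i'" "a < r" "i' < s"
proof
  show "i = i div s * s + i mod s" by simp
  show "i div s < r" using assms by (simp add: less_mult_imp_div_less)
  show "i mod s < s" using assms by (cases "s = 0") auto
qed

lemma kron_carrier:
  "X \<in> carrier_mat r r' \<Longrightarrow> Y \<in> carrier_mat s s' \<Longrightarrow> kron X Y \<in> carrier_mat (r * s) (r' * s')"
  by (simp add: kron_def)

lemma kron_index:
  assumes "X \<in> carrier_mat r r'" "Y \<in> carrier_mat s s'"
    and "a < r" "b < r'" "i < s" "j < s'"
  shows "kron X Y $$ (a * s + i, b * s' + j) = X $$ (a,b) * Y $$ (i,j)"
  using assms mixed_radix_less[of a r i s] mixed_radix_less[of b r' j s'] by (simp add: kron_def)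

lemma evalV_carrier: "evalV q \<alpha> g \<in> carrier_mat 2 2"
  by (simp add: evalV_def)

lemma tens_carrier: "tens q as g \<in> carrier_mat (2 ^ length as) (2 ^ length as)"
proof (induction as arbitrary: g)
  case Nil
  show ?case by (cases g) auto
next
  case (Cons \<alpha> as)
  have "kron (evalV q \<alpha> h) (tens q as h') \<in> carrier_mat (2 ^ length (\<alpha> # as)) (2 ^ length (\<alpha> # as))"
    for h h' using kron_carrier[OF evalV_carrier Cons.IH] by simp
  moreover have "kron (1\<^sub>m 2) (tens q as h) \<in> carrier_mat (2 ^ length (\<alpha> # as)) (2 ^ length (\<alpha> # as))"
    for h using kron_carrier[OF one_carrier_mat Cons.IH] by simp
  moreover have "kron (evalV q \<alpha> h) (1\<^sub>m (2 ^ length as)) \<in> carrier_mat (2 ^ length (\<alpha> # as)) (2 ^ length (\<alpha> # as))"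
    for h using kron_carrier[OF evalV_carrier one_carrier_mat] by simp
  ultimately show ?case by (cases g) (simp_all add: add_carrier_mat)
qed

lemma tens_dims [simp]:
  "dim_row (tens q as g) = 2 ^ length as" "dim_col (tens q as g) = 2 ^ length as"
  using tens_carrier[of q as g] by auto

lemma kron_mat_diag:
  "kron (mat_diag r f) (mat_diag s g) = mat_diag (r * s) (\<lambda>i. f (i div s) * g (i mod s))"
proof (rule eq_matI)
  fix i j assume "i < dim_row (mat_diag (r * s) (\<lambda>i. f (i div s) * g (i mod s)))"
    and "j < dim_col (mat_diag (r * s) (\<lambda>i. f (i div s) * g (i mod s)))"
  hence ij: "i < r * s" "j < r * s" by (auto simp: mat_diag_def)
  hence "i mod s < s" "j mod s < s" by (cases "s = 0"; simp)+
  moreover have "i = j \<longleftrightarrow> i div s = j div s \<and> i mod s = j mod s"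
    by (metis div_mult_mod_eq)
  ultimately show "kron (mat_diag r f) (mat_diag s g) $$ (i,j) = mat_diag (r * s) (\<lambda>i. f (i div s) * g (i mod s)) $$ (i,j)"
    using ij by (auto simp: kron_def mat_diag_def less_mult_imp_div_less)
qed (auto simp: kron_def mat_diag_def)

lemma tens_Cartan_diag:
  fixes q :: "'a::field" and c :: int
  assumes q: "q \<noteq> 0"
    and nil: "tens q [] g = 1\<^sub>m 1"
    and cons: "\<And>\<alpha> as. tens q (\<alpha> # as) g = kron (evalV q \<alpha> g) (tens q as g)"
    and eval: "\<And>\<alpha>. evalV q \<alpha> g = mat_diag 2 (\<lambda>a. q powi (c * (2 * int a - 1)))"
  shows "tens q as g = mat_diag (2 ^ length as) (\<lambda>i. q powi (c * (2 * int (ycount (length as) i) - int (length as))))"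
proof (induction as)
  case Nil
  show ?case by (subst nil) (auto simp: mat_diag_def intro!: eq_matI)
next
  case (Cons \<alpha> as)
  let ?m = "length as"
  have "tens q (\<alpha> # as) g = mat_diag (2 * 2 ^ ?m)
      (\<lambda>i. q powi (c * (2 * int (i div 2 ^ ?m) - 1)) * q powi (c * (2 * int (ycount ?m (i mod 2 ^ ?m)) - int ?m)))"
    by (subst cons) (simp add: eval Cons.IH kron_mat_diag)
  also have "\<dots> = mat_diag (2 * 2 ^ ?m) (\<lambda>i. q powi (c * (2 * int (ycount (Suc ?m) i) - int (Suc ?m))))"
    using q by (simp add: power_int_add[symmetric] algebra_simps)
  finally show ?case by simp
qed

lemma evalV_Cartan:
  assumes "q \<noteq> 0"
  shows "evalV q \<alpha> K0 = mat_diag 2 (\<lambda>a. q powi (1 * (2 * int a - 1)))"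
    and "evalV q \<alpha> K1 = mat_diag 2 (\<lambda>a. q powi (- 1 * (2 * int a - 1)))"
  using assms
  by (auto simp: evalV_def mat_diag_def power_int_minus1_right less_Suc_eq numeral_2_eq_2 intro!: eq_matI)

lemma tens_K0:
  assumes "q \<noteq> 0"
  shows "tens q as K0
     = mat_diag (2 ^ length as) (\<lambda>i. q powi (2 * int (ycount (length as) i) - int (length as)))"
  using tens_Cartan_diag[OF assms _ _ evalV_Cartan(1)[OF assms]] by simp

lemma tens_K1:
  assumes "q \<noteq> 0"
  shows "tens q as K1
     = mat_diag (2 ^ length as) (\<lambda>i. q powi (int (length as) - 2 * int (ycount (length as) i)))"
  using tens_Cartan_diag[OF assms _ _ evalV_Cartan(2)[OF assms]] by (simp add: algebra_simps)

definition raises :: "nat \<Rightarrow> nat \<Rightarrow> nat \<Rightarrow> bool" where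
  "raises m i j \<longleftrightarrow> j < i \<and> ycount m j < ycount m i"

lemma raises_Suc:
  assumes "a < 2" "b < 2" "i < 2 ^ m" "j < 2 ^ m"
    and "(a = 1 \<and> b = 0 \<and> i = j) \<or> (a = b \<and> raises m i j)"
  shows "raises (Suc m) (a * 2 ^ m + i) (b * 2 ^ m + j)"
  using assms by (auto simp: raises_def ycount_split simp del: ycount.simps)

lemma kron_sum_index:
  assumes "X \<in> carrier_mat 2 2" "X' \<in> carrier_mat 2 2" "Y \<in> carrier_mat N N" "Y' \<in> carrier_mat N N"
    and "a < 2" "b < 2" "i < N" "j < N"
  shows "(kron X Y + kron X' Y') $$ (a * N + i, b * N + j) = X $$ (a,b) * Y $$ (i,j) + X' $$ (a,b) * Y' $$ (i,j)"
proof -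
  have "a * N + i < 2 * N" "b * N + j < 2 * N" using assms(5-8) by (simp_all add: mixed_radix_less)
  thus ?thesis using assms kron_carrier[OF assms(2,4)] by (simp add: kron_index)
qed

lemma evalV_support:
  assumes "a < 2" "b < 2"
  shows "evalV q \<alpha> E0p $$ (a,b) \<noteq> 0 \<Longrightarrow> a = 1 \<and> b = 0"
    and "evalV q \<alpha> E1m $$ (a,b) \<noteq> 0 \<Longrightarrow> a = 1 \<and> b = 0"
    and "evalV q \<alpha> E1p $$ (a,b) \<noteq> 0 \<Longrightarrow> a = 0 \<and> b = 1"
    and "evalV q \<alpha> E0m $$ (a,b) \<noteq> 0 \<Longrightarrow> a = 0 \<and> b = 1"
    and "evalV q \<alpha> K0inv $$ (a,b) \<noteq> 0 \<Longrightarrow> a = b"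
    and "evalV q \<alpha> K1inv $$ (a,b) \<noteq> 0 \<Longrightarrow> a = b"
  using assms by (auto simp: evalV_def split: if_splits)

lemma tens_E_Cons_index:
  assumes "a < 2" "b < 2" "i < 2 ^ length as" "j < 2 ^ length as"
  shows "tens q (\<alpha> # as) E0p $$ (a * 2 ^ length as + i, b * 2 ^ length as + j)
      = evalV q \<alpha> E0p $$ (a,b) * tens q as K0 $$ (i,j) + 1\<^sub>m 2 $$ (a,b) * tens q as E0p $$ (i,j)"
    and "tens q (\<alpha> # as) E1p $$ (a * 2 ^ length as + i, b * 2 ^ length as + j)
      = evalV q \<alpha> E1p $$ (a,b) * tens q as K1 $$ (i,j) + 1\<^sub>m 2 $$ (a,b) * tens q as E1p $$ (i,j)"
    and "tens q (\<alpha> # as) E0m $$ (a * 2 ^ length as + i, b * 2 ^ length as + j)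
      = evalV q \<alpha> E0m $$ (a,b) * 1\<^sub>m (2 ^ length as) $$ (i,j)
        + evalV q \<alpha> K0inv $$ (a,b) * tens q as E0m $$ (i,j)"
    and "tens q (\<alpha> # as) E1m $$ (a * 2 ^ length as + i, b * 2 ^ length as + j)
      = evalV q \<alpha> E1m $$ (a,b) * 1\<^sub>m (2 ^ length as) $$ (i,j)
        + evalV q \<alpha> K1inv $$ (a,b) * tens q as E1m $$ (i,j)"
  using kron_sum_index[OF _ _ tens_carrier tens_carrier assms]
    kron_sum_index[OF _ _ one_carrier_mat tens_carrier assms]
  by (simp_all only: tens.simps gen.case evalV_carrier one_carrier_mat)

lemma tens_E_pattern:
  assumes q: "q \<noteq> 0"
  shows "i < 2 ^ length as \<Longrightarrow> j < 2 ^ length as \<Longrightarrow>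
    (tens q as E0p $$ (i,j) \<noteq> 0 \<longrightarrow> raises (length as) i j) \<and>
    (tens q as E1m $$ (i,j) \<noteq> 0 \<longrightarrow> raises (length as) i j) \<and>
    (tens q as E1p $$ (i,j) \<noteq> 0 \<longrightarrow> raises (length as) j i) \<and>
    (tens q as E0m $$ (i,j) \<noteq> 0 \<longrightarrow> raises (length as) j i)"
proof (induction as arbitrary: i j)
  case Nil
  thus ?case by simp
next
  case (Cons \<alpha> as)
  let ?m = "length as" and ?N = "2 ^ length as :: nat"
  obtain a i' where i: "i = a * ?N + i'" "a < 2" "i' < ?N"
    using Cons.prems(1) by (auto elim: mixed_radix_split)
  obtain b j' where j: "j = b * ?N + j'" "b < 2" "j' < ?N"
    using Cons.prems(2) by (auto elim: mixed_radix_split)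
  note IH = Cons.IH[OF i(3) j(3)]
  note entry = tens_E_Cons_index[OF i(2) j(2) i(3) j(3), of q \<alpha>, folded i(1) j(1)]
  note support = evalV_support[OF i(2) j(2), of q \<alpha>]
  have K: "tens q as K0 $$ (i',j') \<noteq> 0 \<Longrightarrow> i' = j'" "tens q as K1 $$ (i',j') \<noteq> 0 \<Longrightarrow> i' = j'"
    using i(3) j(3) by (auto simp: tens_K0[OF q] tens_K1[OF q] mat_diag_def split: if_splits)
  have one: "(1\<^sub>m k :: 'a mat) $$ (x,y) \<noteq> 0 \<Longrightarrow> x = y" if "x < k" "y < k" for k x y
    using that by (auto split: if_splits)
  have "tens q (\<alpha> # as) E0p $$ (i,j) \<noteq> 0 \<Longrightarrow> (a = 1 \<and> b = 0 \<and> i' = j') \<or> (a = b \<and> raises ?m i' j')"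
    using entry(1) IH K support one[OF i(2) j(2)] by (metis mult_zero_left mult_zero_right add_0)
  moreover have "tens q (\<alpha> # as) E1m $$ (i,j) \<noteq> 0 \<Longrightarrow> (a = 1 \<and> b = 0 \<and> i' = j') \<or> (a = b \<and> raises ?m i' j')"
    using entry(4) IH support one[OF i(3) j(3)] by (metis mult_zero_left mult_zero_right add_0)
  moreover have "tens q (\<alpha> # as) E1p $$ (i,j) \<noteq> 0 \<Longrightarrow> (b = 1 \<and> a = 0 \<and> j' = i') \<or> (b = a \<and> raises ?m j' i')"
    using entry(2) IH K support one[OF i(2) j(2)] by (metis mult_zero_left mult_zero_right add_0)
  moreover have "tens q (\<alpha> # as) E0m $$ (i,j) \<noteq> 0 \<Longrightarrow> (b = 1 \<and> a = 0 \<and> j' = i') \<or> (b = a \<and> raises ?m j' i')"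
    using entry(3) IH support one[OF i(3) j(3)] by (metis mult_zero_left mult_zero_right add_0)
  ultimately show ?case
    using raises_Suc[OF i(2) j(2) i(3) j(3)] raises_Suc[OF j(2) i(2) j(3) i(3)] by (simp add: i j)
qed

lemma opA_index:
  assumes q: "q \<noteq> 0" and ij: "i < 2 ^ length as" "j < 2 ^ length as"
  shows "opA q as a b c u v $$ (i,j) = (if i = j then theta a b c q (length as) (ycount (length as) i) else 0)
    + u * tens q as E0p $$ (i,j)
    + v * (tens q as E1m $$ (i,j) * q powi (int (length as) - 2 * int (ycount (length as) j)))"
proof -
  have "tens q as E1m * tens q as K1 = mat (2 ^ length as) (2 ^ length as)
      (\<lambda>(i,j). tens q as E1m $$ (i,j) * q powi (int (length as) - 2 * int (ycount (length as) j)))"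
    unfolding tens_K1[OF q] by (rule mat_diag_mult_right[OF tens_carrier])
  thus ?thesis using ij
    by (simp add: opA_def tens_K0[OF q] tens_K1[OF q] theta_def mat_diag_def)
qed

lemma opAs_index:
  assumes q: "q \<noteq> 0" and ij: "i < 2 ^ length as" "j < 2 ^ length as"
  shows "opAs q as a b c u v $$ (i,j) = (if i = j then theta a b c q (length as) (ycount (length as) i) else 0)
    + u * tens q as E1p $$ (i,j)
    + v * (tens q as E0m $$ (i,j) * q powi (2 * int (ycount (length as) j) - int (length as)))"
proof -
  have "tens q as E0m * tens q as K0 = mat (2 ^ length as) (2 ^ length as)
      (\<lambda>(i,j). tens q as E0m $$ (i,j) * q powi (2 * int (ycount (length as) j) - int (length as)))"
    unfolding tens_K0[OF q] by (rule mat_diag_mult_right[OF tens_carrier])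
  thus ?thesis using ij
    by (simp add: opAs_def tens_K0[OF q] tens_K1[OF q] theta_def mat_diag_def)
qed

lemma opA_carrier: "opA q as a b c u v \<in> carrier_mat (2 ^ length as) (2 ^ length as)"
  unfolding opA_def by (intro add_carrier_mat smult_carrier_mat mult_carrier_mat[OF tens_carrier tens_carrier]
      one_carrier_mat tens_carrier)

lemma opAs_carrier: "opAs q as a b c u v \<in> carrier_mat (2 ^ length as) (2 ^ length as)"
  unfolding opAs_def by (intro add_carrier_mat smult_carrier_mat mult_carrier_mat[OF tens_carrier tens_carrier]
      one_carrier_mat tens_carrier)

lemma opA_graded:
  assumes q: "q \<noteq> 0" and ij: "i < 2 ^ length as" "j < 2 ^ length as"
  shows "opA q as a b c u v $$ (i,i) = theta a b c q (length as) (ycount (length as) i)"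
    and "i \<noteq> j \<Longrightarrow> opA q as a b c u v $$ (i,j) \<noteq> 0 \<Longrightarrow> raises (length as) i j"
  using tens_E_pattern[OF q ij(1) ij(1)] tens_E_pattern[OF q ij]
  by (auto simp: opA_index[OF q] ij raises_def)

lemma opAs_graded:
  assumes q: "q \<noteq> 0" and ij: "i < 2 ^ length as" "j < 2 ^ length as"
  shows "opAs q as a b c u v $$ (i,i) = theta a b c q (length as) (ycount (length as) i)"
    and "i \<noteq> j \<Longrightarrow> opAs q as a b c u v $$ (i,j) \<noteq> 0 \<Longrightarrow> raises (length as) j i"
  using tens_E_pattern[OF q ij(1) ij(1)] tens_E_pattern[OF q ij]
  by (auto simp: opAs_index[OF q] ij raises_def)

lemma diag_mat_opA:
  "q \<noteq> 0 \<Longrightarrow> diag_mat (opA q as a b c u v)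
     = map (\<lambda>i. theta a b c q (length as) (ycount (length as) i)) [0..<2 ^ length as]"
  using opA_carrier[of q as a b c u v] by (intro nth_equalityI) (auto simp: diag_mat_def opA_graded(1))

lemma diag_mat_opAs:
  "q \<noteq> 0 \<Longrightarrow> diag_mat (opAs q as a b c u v)
     = map (\<lambda>i. theta a b c q (length as) (ycount (length as) i)) [0..<2 ^ length as]"
  using opAs_carrier[of q as a b c u v] by (intro nth_equalityI) (auto simp: diag_mat_def opAs_graded(1))

(* Spectrum of A: it is lower triangular and graded by minus the y-count. *)
lemma opA_spectrum:
  assumes q: "q \<noteq> 0" and inj: "inj_on (theta a b c q (length as)) {0..length as}"
  shows "diagonalizable (opA q as a b c u v)"
    and "eigenvalue (opA q as a b c u v) e \<longleftrightarrow> (\<exists>k\<le>length as. e = theta a b c q (length as) k)"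
    and "k \<le> length as \<Longrightarrow>
      kernel_dim (char_matrix (opA q as a b c u v) (theta a b c q (length as) k)) = length as choose k"
proof -
  let ?n = "2 ^ length as" and ?y = "ycount (length as)" and ?A = "opA q as a b c u v"
  interpret A: graded_lower_triangular ?A ?n "\<lambda>i. - int (?y i)"
  proof
    show "j < i \<and> - int (?y i) < - int (?y j)" if "i < ?n" "j < ?n" "i \<noteq> j" "?A $$ (i,j) \<noteq> 0" for i j
      using opA_graded(2)[OF q that(1,2)] that(3,4) by (simp add: raises_def)
    show "?A $$ (i,i) = ?A $$ (j,j) \<longleftrightarrow> - int (?y i) = - int (?y j)" if "i < ?n" "j < ?n" for i j
      using inj_on_ycount_eq_iff[OF inj that]
      by (simp add: opA_graded(1)[OF q that(1,1)] opA_graded(1)[OF q that(2,2)])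
  qed (rule opA_carrier)
  show "diagonalizable ?A" by (rule A.spectrum(1))
  show "eigenvalue ?A e \<longleftrightarrow> (\<exists>k\<le>length as. e = theta a b c q (length as) k)"
    using A.spectrum(2)[of e] set_map_ycount[of e "theta a b c q (length as)"]
    by (simp only: diag_mat_opA[OF q])
  show "k \<le> length as \<Longrightarrow> kernel_dim (char_matrix ?A (theta a b c q (length as) k)) = length as choose k"
    using A.spectrum(3) count_map_ycount[OF inj] by (simp only: diag_mat_opA[OF q])
qed

(* Spectrum of A*: it is upper triangular and graded by the y-count. *)
lemma opAs_spectrum:
  assumes q: "q \<noteq> 0" and inj: "inj_on (theta a b c q (length as)) {0..length as}"
  shows "diagonalizable (opAs q as a b c u v)"
    and "eigenvalue (opAs q as a b c u v) e \<longleftrightarrow> (\<exists>k\<le>length as. e = theta a b c q (length as) k)"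
    and "k \<le> length as \<Longrightarrow>
      kernel_dim (char_matrix (opAs q as a b c u v) (theta a b c q (length as) k)) = length as choose k"
proof -
  let ?n = "2 ^ length as" and ?y = "ycount (length as)" and ?S = "opAs q as a b c u v"
  interpret S: graded_upper_triangular ?S ?n ?y
  proof
    show "i < j \<and> ?y i < ?y j" if "i < ?n" "j < ?n" "i \<noteq> j" "?S $$ (i,j) \<noteq> 0" for i j
      using opAs_graded(2)[OF q that(1,2)] that(3,4) by (simp add: raises_def)
    show "?S $$ (i,i) = ?S $$ (j,j) \<longleftrightarrow> ?y i = ?y j" if "i < ?n" "j < ?n" for i j
      using inj_on_ycount_eq_iff[OF inj that]
      by (simp add: opAs_graded(1)[OF q that(1,1)] opAs_graded(1)[OF q that(2,2)])
  qed (rule opAs_carrier)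
  show "diagonalizable ?S" by (rule S.spectrum(1))
  show "eigenvalue ?S e \<longleftrightarrow> (\<exists>k\<le>length as. e = theta a b c q (length as) k)"
    using S.spectrum(2)[of e] set_map_ycount[of e "theta a b c q (length as)"]
    by (simp only: diag_mat_opAs[OF q])
  show "k \<le> length as \<Longrightarrow> kernel_dim (char_matrix ?S (theta a b c q (length as) k)) = length as choose k"
    using S.spectrum(3) count_map_ycount[OF inj] by (simp only: diag_mat_opAs[OF q])
qed

(* The theorem: only q <> 0 and the distinctness of the theta_i resp. theta^*_i are needed. *)
theorem lemma9p4:
  fixes q a b c as' bs cs u v us vs :: "'a :: field"
    and alphas :: "'a list" and d :: nat
  assumes "alg_closed_field TYPE('a)"
    and "d = length alphas"
    and "q \<noteq> 0" "b \<noteq> 0" "c \<noteq> 0" "bs \<noteq> 0" "cs \<noteq> 0"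
    and "q ^ 2 \<noteq> 1" "q ^ 2 \<noteq> -1"
    and "inj_on (theta a b c q d) {0..d}"
    and "inj_on (theta as' bs cs q d) {0..d}"
    and "\<forall>\<alpha> \<in> set alphas. \<alpha> \<noteq> 0"
    and "u * vs = - b * bs * inverse q * (q - inverse q) ^ 2"
    and "v * us = - c * cs * inverse q * (q - inverse q) ^ 2"
  shows "(\<exists>D. diagonal_mat D \<and> similar_mat (opA q alphas a b c u v) D)
       \<and> (\<forall>ev. eigenvalue (opA q alphas a b c u v) ev \<longleftrightarrow> (\<exists>i\<le>d. ev = theta a b c q d i))
       \<and> (\<forall>i\<le>d. kernel_dim (char_matrix (opA q alphas a b c u v) (theta a b c q d i)) = d choose i)
       \<and> (\<exists>D. diagonal_mat D \<and> similar_mat (opAs q alphas as' bs cs us vs) D)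
       \<and> (\<forall>ev. eigenvalue (opAs q alphas as' bs cs us vs) ev \<longleftrightarrow> (\<exists>i\<le>d. ev = theta as' bs cs q d i))
       \<and> (\<forall>i\<le>d. kernel_dim (char_matrix (opAs q alphas as' bs cs us vs) (theta as' bs cs q d i)) = d choose i)"
proof -
  note A = opA_spectrum[OF assms(3), where as = alphas and a = a and b = b and c = c and u = u and v = v]
  note S = opAs_spectrum[OF assms(3), where as = alphas and a = as' and b = bs and c = cs and u = us and v = vs]
  show ?thesis
    using A S assms(10,11) unfolding assms(2) diagonalizable_def by simp
qed

end
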